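(* Let $\mathbf A\in\mathbb C^{n\times n}$ be a symmetric adjacency matrix with loopy Laplacian $\mathbf Q$, voltages $\mathbf V$, currents $\mathbf C=\mathbf Q\mathbf V$ and power injections $\mathbf S=\mathbf V\circ\overline{\mathbf C}$, defining a connected network satisfying Hypothesis 1 and Hypothesis 2, and suppose the nodes $\{b_{n-2},b_{n-1},b_n\}$ form a triangle (are pairwise joined by lines). Let $\alpha=\{1,\dots,n-3\}$, let $\mathbf e_j\in\mathbb R^{n-3}$ be the $j$-th standard basis vector, and define the linear aggregation of the triangle by $$\mathbf Q^{\rm tri}=\begin{pmatrix}\mathbf Q_{[\alpha,\alpha]} & \sum_{i=n-2}^n\sum_{j=1}^{n-3}\mathbf e_jQ_{i,j}\\ \sum_{i=n-2}^n\sum_{j=1}^{n-3}\mathbf e_j^{\mathrm T}Q_{i,j} & \sum_{i,j=n-2}^nQ_{i,j}\end{pmatrix},\quad \mathbf C^{\rm tri}=\begin{pmatrix}\mathbf C_{[\alpha]}\\ \sum_{j=n-2}^nC_j\end{pmatrix},$$ $\mathbf V^{\rm tri}=(\mathbf Q^{\rm tri})^{-1}\mathbf C^{\rm tri}$ and $\mathbf S^{\rm tri}=\mathbf V^{\rm tri}\circ\overline{\mathbf C^{\rm tri}}$. Then: (i) $\mathbf Q^{\rm tri}\in\mathbb C^{(n-2)\times(n-2)}$ is an invertible loopy Laplacian, so $\mathbf V^{\rm tri}$ and $\mathbf S^{\rm tri}$ are well defined; (ii) the network defined by $\mathbf Q^{\rm tri}$ (with currents $\mathbf C^{\rm tri}$,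 voltages $\mathbf V^{\rm tri}$ and power injections $\mathbf S^{\rm tri}$) satisfies Hypothesis 1 and Hypothesis 2; (iii) the triangle-reduced adjacency matrix $\mathbf A^{\rm tri}$, given by $A^{\rm tri}_{i,j}=-Q^{\rm tri}_{i,j}$ ($i\ne j$) and $A^{\rm tri}_{i,i}=\sum_kQ^{\rm tri}_{i,k}$, satisfies, for $1\le i\le n-3$, $A^{\rm tri}_{i,n-2}\ne0$ if and only if $A_{i,k}\ne0$ for some $k\in\{n-2,n-1,n\}$.
   Context: For $i\ne j$, $A_{i,j}$ is the admittance of line $\{b_i,b_j\}$ (present iff $A_{i,j}\ne0$), $A_{i,i}$ the shunt admittance. Loopy Laplacian of an adjacency matrix: $Q_{i,j}=-A_{i,j}$ ($i\ne j$), $Q_{i,i}=\sum_kA_{i,k}$; a matrix is a loopy Laplacian if it arises this way from a symmetric adjacency matrix. $\mathbf Q_{[\alpha,\alpha]}$ is the block with rows and columns in $\alpha$, and $\mathbf C_{[\alpha]}$ the subvector indexed by $\alpha$. Hypothesis 1: the graph of lines is connected, every nonzero entry of the adjacency matrix is purely imaginary with negative imaginary part, and some diagonal entry is nonzero. Hypothesis 2: lossless power-flow with the sum of all power injections equal to $0$, where power injections are $\mathbf V\circ\overline{\mathbf C}$ ($\circ$ entrywise product, bar complex conjugation). *)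

theory Defs
  imports Complex_Main "Jordan_Normal_Form.Matrix" "Jordan_Normal_Form.Gauss_Jordan_Elimination"
begin

text \<open>Nodes b_1..b_n are represented by the indices 0..n-1.\<close>

definition loopy_laplacian :: "complex mat \<Rightarrow> complex mat" where
  "loopy_laplacian A = mat (dim_row A) (dim_col A)
     (\<lambda>(i,j). if i = j then (\<Sum>k<dim_col A. A $$ (i,k)) else - A $$ (i,j))"

definition sym_mat :: "complex mat \<Rightarrow> bool" where
  "sym_mat A \<longleftrightarrow> A\<^sup>T = A"

definition is_loopy_laplacian :: "complex mat \<Rightarrow> bool" where
  "is_loopy_laplacian Q \<longleftrightarrow>
     (\<exists>A. A \<in> carrier_mat (dim_row Q) (dim_row Q) \<and> sym_mat A \<and> Q = loopy_laplacian A)"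

definition adj_of_laplacian :: "complex mat \<Rightarrow> complex mat" where
  "adj_of_laplacian Q = mat (dim_row Q) (dim_col Q)
     (\<lambda>(i,j). if i = j then (\<Sum>k<dim_col Q. Q $$ (i,k)) else - Q $$ (i,j))"

definition line :: "complex mat \<Rightarrow> nat \<Rightarrow> nat \<Rightarrow> bool" where
  "line A i j \<longleftrightarrow> i < dim_row A \<and> j < dim_row A \<and> i \<noteq> j \<and> A $$ (i,j) \<noteq> 0"

definition connected_network :: "complex mat \<Rightarrow> bool" where
  "connected_network A \<longleftrightarrow>
     (\<forall>i<dim_row A. \<forall>j<dim_row A. (line A)\<^sup>*\<^sup>* i j)"

definition hyp1 :: "complex mat \<Rightarrow> bool" where
  "hyp1 A \<longleftrightarrow> connected_network A
     \<and> (\<forall>i<dim_row A. \<forall>j<dim_row A. A $$ (i,j) \<noteq> 0 \<longrightarrow>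
            Re (A $$ (i,j)) = 0 \<and> Im (A $$ (i,j)) < 0)
     \<and> (\<exists>i<dim_row A. A $$ (i,i) \<noteq> 0)"

definition hyp2 :: "complex mat \<Rightarrow> complex vec \<Rightarrow> complex vec \<Rightarrow> bool" where
  "hyp2 Q V C \<longleftrightarrow> C = Q *\<^sub>v V \<and> (\<Sum>i<dim_vec V. V $ i * cnj (C $ i)) = 0"

text \<open>Triangle aggregation of the last three nodes (indices n-3, n-2, n-1).\<close>
definition Q_tri :: "nat \<Rightarrow> complex mat \<Rightarrow> complex mat" where
  "Q_tri n Q = mat (n-2) (n-2) (\<lambda>(i,j).
      if i < n-3 \<and> j < n-3 then Q $$ (i,j)
      else if i < n-3 then (\<Sum>k\<in>{n-3..<n}. Q $$ (k,i))
      else if j < n-3 then (\<Sum>k\<in>{n-3..<n}. Q $$ (k,j))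
      else (\<Sum>k\<in>{n-3..<n}. \<Sum>l\<in>{n-3..<n}. Q $$ (k,l)))"

definition C_tri :: "nat \<Rightarrow> complex vec \<Rightarrow> complex vec" where
  "C_tri n C = vec (n-2) (\<lambda>i. if i < n-3 then C $ i else (\<Sum>k\<in>{n-3..<n}. C $ k))"

end

theory Submission
  imports Defs "Jordan_Normal_Form.Determinant"
begin

(* All admittances are purely inductive, so for the loopy Laplacian Q of A the form x* Q x equals
   i times the nonpositive quantity sum_i Im A_ii |x_i|^2 + 1/2 sum_ij Im A_ij |x_i - x_j|^2.
   It vanishes only if x is constant along lines and zero at a node with a shunt, hence, by
   connectivity, only for x = 0. So Q has trivial kernel and is invertible, and Hypothesis 2, which
   says that the conjugate of V* Q V vanishes, forces V = 0; then all currents, and with them the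
   aggregated currents and voltages, vanish.
   Aggregating the last three nodes turns Q into the loopy Laplacian of the adjacency matrix in
   which these nodes are merged into one. Its entries are sums of admittances of A, all on the
   closed negative imaginary half-axis, and such a sum vanishes only if every summand does; this
   transfers the sign condition, the shunt and connectivity, and gives (iii). *)

lemma sym_mat_entry:
  assumes "A \<in> carrier_mat n n" "sym_mat A" "i < n" "j < n"
  shows "A $$ (i,j) = A $$ (j,i)"
  by (metis assms carrier_matD index_transpose_mat(1) sym_mat_def)

lemma loopy_laplacian_carrier:
  "A \<in> carrier_mat n m \<Longrightarrow> loopy_laplacian A \<in> carrier_mat n m"
  by (auto simp: loopy_laplacian_def)

lemma is_loopy_laplacian_loopy_laplacian:
  "A \<in> carrier_mat n n \<Longrightarrow> sym_mat A \<Longrightarrow> is_loopy_laplacian (loopy_laplacian A)"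
  by (auto simp: is_loopy_laplacian_def loopy_laplacian_def)

lemma mult_loopy_laplacian:
  assumes A: "A \<in> carrier_mat n n" and x: "x \<in> carrier_vec n" and i: "i < n"
  shows "(loopy_laplacian A *\<^sub>v x) $ i = A $$ (i,i) * x $ i + (\<Sum>j<n. A $$ (i,j) * (x $ i - x $ j))"
proof -
  have "(loopy_laplacian A *\<^sub>v x) $ i = (\<Sum>j<n. loopy_laplacian A $$ (i,j) * x $ j)"
    using A x i by (simp add: loopy_laplacian_def scalar_prod_def atLeast0LessThan)
  also have "\<dots> = (\<Sum>j<n. (if j = i then (\<Sum>k<n. A $$ (i,k)) * x $ i else 0)
      - (if j = i then 0 else A $$ (i,j) * x $ j))"
    using A i by (intro sum.cong) (auto simp: loopy_laplacian_def)
  also have "\<dots> = (\<Sum>k<n. A $$ (i,k)) * x $ i - ((\<Sum>j<n. A $$ (i,j) * x $ j) - A $$ (i,i) * x $ i)"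
    using i by (simp add: sum_subtractf sum.If_cases Diff_eq[symmetric] sum_diff1)
  also have "\<dots> = A $$ (i,i) * x $ i + (\<Sum>j<n. A $$ (i,j) * (x $ i - x $ j))"
    by (simp add: right_diff_distrib sum_subtractf sum_distrib_right)
  finally show ?thesis .
qed

lemma sum_row_loopy_laplacian:
  assumes A: "A \<in> carrier_mat n n" and k: "k \<in> S" and S: "S \<subseteq> {..<n}"
  shows "(\<Sum>l\<in>S. loopy_laplacian A $$ (k,l)) = (\<Sum>l\<in>{..<n} - S. A $$ (k,l)) + A $$ (k,k)"
proof -
  have fin: "finite S" using S finite_subset by blast
  have S_bound: "l < n" if "l \<in> S" for l using S that by blast
  have "(\<Sum>l\<in>S. loopy_laplacian A $$ (k,l))
      = (\<Sum>l\<in>S. (if l = k then (\<Sum>l<n. A $$ (k,l)) else 0) - (if l = k then 0 else A $$ (k,l)))"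
    using A S_bound k by (intro sum.cong) (auto simp: loopy_laplacian_def)
  also have "\<dots> = (\<Sum>l<n. A $$ (k,l)) - ((\<Sum>l\<in>S. A $$ (k,l)) - A $$ (k,k))"
    using fin k by (simp add: sum_subtractf sum.If_cases Diff_eq[symmetric] sum_diff1)
  finally show ?thesis
    using S by (simp add: sum_diff)
qed

lemma adj_of_laplacian_loopy_laplacian:
  assumes A: "A \<in> carrier_mat n n"
  shows "adj_of_laplacian (loopy_laplacian A) = A"
proof (rule eq_matI)
  fix i j assume "i < dim_row A" "j < dim_col A"
  with A have i: "i < n" and j: "j < n" by auto
  have "(\<Sum>k<n. loopy_laplacian A $$ (i,k)) = (\<Sum>k<n. A $$ (i,k)) - ((\<Sum>k<n. A $$ (i,k)) - A $$ (i,i))"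
    using A i by (simp add: loopy_laplacian_def sum.If_cases Diff_eq[symmetric] sum_diff1 sum_negf)
  then show "adj_of_laplacian (loopy_laplacian A) $$ (i,j) = A $$ (i,j)"
    using A i j by (cases "i = j") (simp_all add: adj_of_laplacian_def loopy_laplacian_def)
qed (use A in \<open>auto simp: adj_of_laplacian_def loopy_laplacian_def\<close>)

definition nonpos_imaginary :: "complex \<Rightarrow> bool" where
  "nonpos_imaginary z \<longleftrightarrow> Re z = 0 \<and> Im z \<le> 0"

lemma nonpos_imaginary_nonzero_iff:
  "nonpos_imaginary z \<and> z \<noteq> 0 \<longleftrightarrow> Re z = 0 \<and> Im z < 0"
  by (auto simp: nonpos_imaginary_def complex_eq_iff)

lemma nonpos_imaginary_sum:
  "(\<And>k. k \<in> S \<Longrightarrow> nonpos_imaginary (f k)) \<Longrightarrow> nonpos_imaginary (sum f S)"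
  by (simp add: nonpos_imaginary_def Re_sum Im_sum sum_nonpos)

lemma sum_nonpos_imaginary_eq_0_iff:
  assumes "finite S" "\<And>k. k \<in> S \<Longrightarrow> nonpos_imaginary (f k)"
  shows "sum f S = 0 \<longleftrightarrow> (\<forall>k\<in>S. f k = 0)"
proof -
  have "sum f S = 0 \<longleftrightarrow> (\<Sum>k\<in>S. - Im (f k)) = 0"
    using assms by (simp add: complex_eq_iff Re_sum Im_sum sum_negf nonpos_imaginary_def)
  also have "\<dots> \<longleftrightarrow> (\<forall>k\<in>S. f k = 0)"
    using assms by (subst sum_nonneg_eq_0_iff) (auto simp: complex_eq_iff nonpos_imaginary_def)
  finally show ?thesis .
qed

lemma hyp1_nonpos_imaginary:
  "hyp1 A \<Longrightarrow> i < dim_row A \<Longrightarrow> j < dim_row A \<Longrightarrow> nonpos_imaginary (A $$ (i,j))"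
  unfolding hyp1_def nonpos_imaginary_def by force

lemma connected_network_const:
  assumes "connected_network A"
    and "\<And>i j. line A i j \<Longrightarrow> f i = f j"
    and "i < dim_row A" "j < dim_row A"
  shows "f i = f j"
proof -
  have "(line A)\<^sup>*\<^sup>* i j" using assms(1,3,4) by (simp add: connected_network_def)
  then show ?thesis by (induction rule: rtranclp_induct) (auto dest: assms(2))
qed

lemma loopy_laplacian_form:
  assumes A: "A \<in> carrier_mat n n" "sym_mat A" and x: "x \<in> carrier_vec n"
  shows "2 * (\<Sum>i<n. cnj (x $ i) * (loopy_laplacian A *\<^sub>v x) $ i) =
    (\<Sum>i<n. 2 * A $$ (i,i) * of_real ((cmod (x $ i))\<^sup>2))
    + (\<Sum>i<n. \<Sum>j<n. A $$ (i,j) * of_real ((cmod (x $ i - x $ j))\<^sup>2))"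
proof -
  have norm_sq: "cnj z * z = of_real ((cmod z)\<^sup>2)" for z
    by (metis complex_norm_square mult.commute)
  define P where "P = (\<Sum>i<n. \<Sum>j<n. A $$ (i,j) * (cnj (x $ i) * (x $ i - x $ j)))"
  have form_sum: "(\<Sum>i<n. cnj (x $ i) * (loopy_laplacian A *\<^sub>v x) $ i)
      = (\<Sum>i<n. A $$ (i,i) * of_real ((cmod (x $ i))\<^sup>2)) + P"
    unfolding P_def sum.distrib[symmetric]
  proof (intro sum.cong)
    fix i assume "i \<in> {..<n}"
    then have "cnj (x $ i) * (loopy_laplacian A *\<^sub>v x) $ i
        = A $$ (i,i) * (cnj (x $ i) * x $ i) + cnj (x $ i) * (\<Sum>j<n. A $$ (i,j) * (x $ i - x $ j))"
      using mult_loopy_laplacian[OF A(1) x] by (simp add: ring_distribs mult.left_commute)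
    then show "cnj (x $ i) * (loopy_laplacian A *\<^sub>v x) $ i = A $$ (i,i) * of_real ((cmod (x $ i))\<^sup>2)
        + (\<Sum>j<n. A $$ (i,j) * (cnj (x $ i) * (x $ i - x $ j)))"
      by (simp only: norm_sq sum_distrib_left mult.left_commute)
  qed simp
  have P_swap: "P = (\<Sum>i<n. \<Sum>j<n. A $$ (i,j) * (cnj (x $ j) * (x $ j - x $ i)))"
    unfolding P_def
  proof (subst sum.swap, intro sum.cong[OF refl])
    fix i j assume "i \<in> {..<n}" "j \<in> {..<n}"
    then show "A $$ (j,i) * (cnj (x $ j) * (x $ j - x $ i)) = A $$ (i,j) * (cnj (x $ j) * (x $ j - x $ i))"
      using sym_mat_entry[OF A, of i j] by simp
  qed
  have "2 * P = P + (\<Sum>i<n. \<Sum>j<n. A $$ (i,j) * (cnj (x $ j) * (x $ j - x $ i)))"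
    unfolding mult_2 by (subst (2) P_swap) (rule refl)
  also have "\<dots> = (\<Sum>i<n. \<Sum>j<n. A $$ (i,j) * (cnj (x $ i) * (x $ i - x $ j) + cnj (x $ j) * (x $ j - x $ i)))"
    by (simp only: P_def sum.distrib[symmetric] distrib_left[symmetric])
  also have "\<dots> = (\<Sum>i<n. \<Sum>j<n. A $$ (i,j) * of_real ((cmod (x $ i - x $ j))\<^sup>2))"
    by (simp only: norm_sq[symmetric] complex_cnj_diff ring_distribs) (simp add: algebra_simps)
  finally have twoP: "2 * P = \<dots>" .
  show ?thesis
    unfolding form_sum distrib_left twoP by (simp add: sum_distrib_left mult.assoc)
qed

lemma loopy_laplacian_form_eq_0:
  assumes A: "A \<in> carrier_mat n n" "sym_mat A"
    and sign: "\<And>i j. i < n \<Longrightarrow> j < n \<Longrightarrow> nonpos_imaginary (A $$ (i,j))"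
    and x: "x \<in> carrier_vec n"
    and form: "(\<Sum>i<n. cnj (x $ i) * (loopy_laplacian A *\<^sub>v x) $ i) = 0"
  shows "\<And>i. i < n \<Longrightarrow> A $$ (i,i) \<noteq> 0 \<Longrightarrow> x $ i = 0"
    and "\<And>i j. i < n \<Longrightarrow> j < n \<Longrightarrow> A $$ (i,j) \<noteq> 0 \<Longrightarrow> x $ i = x $ j"
proof -
  define d where "d i = - Im (A $$ (i,i)) * (cmod (x $ i))\<^sup>2" for i
  define p where "p i j = - Im (A $$ (i,j)) * (cmod (x $ i - x $ j))\<^sup>2" for i j
  have d_nonneg: "d i \<ge> 0" if "i < n" for i
    using sign[OF that that] by (simp add: d_def nonpos_imaginary_def mult_nonpos_nonneg)
  have p_nonneg: "p i j \<ge> 0" if "i < n" "j < n" for i j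
    using sign[OF that] by (simp add: p_def nonpos_imaginary_def mult_nonpos_nonneg)
  have "2 * (\<Sum>i<n. d i) + (\<Sum>i<n. \<Sum>j<n. p i j) = - Im (2 * (\<Sum>i<n. cnj (x $ i) * (loopy_laplacian A *\<^sub>v x) $ i))"
    unfolding loopy_laplacian_form[OF A x]
    by (simp add: d_def p_def Im_sum sum_negf sum_distrib_left mult.assoc)
  then have "2 * (\<Sum>i<n. d i) + (\<Sum>i<n. \<Sum>j<n. p i j) = 0"
    using form by simp
  moreover have "(\<Sum>i<n. d i) \<ge> 0" "(\<Sum>i<n. \<Sum>j<n. p i j) \<ge> 0"
    using d_nonneg p_nonneg by (auto intro!: sum_nonneg)
  ultimately have d_sum: "(\<Sum>i<n. d i) = 0" and p_sum: "(\<Sum>i<n. \<Sum>j<n. p i j) = 0"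
    by linarith+
  have d0: "d i = 0" if "i < n" for i
    using d_sum that d_nonneg by (metis finite_lessThan lessThan_iff sum_nonneg_eq_0_iff)
  have p0: "p i j = 0" if "i < n" "j < n" for i j
  proof -
    have "(\<Sum>j<n. p i j) = 0"
      using p_sum that p_nonneg sum_nonneg_eq_0_iff[of "{..<n}" "\<lambda>i. \<Sum>j<n. p i j"] sum_nonneg
      by (metis (no_types, lifting) finite_lessThan lessThan_iff)
    then show ?thesis
      using that p_nonneg by (metis finite_lessThan lessThan_iff sum_nonneg_eq_0_iff)
  qed
  show "x $ i = 0" if "i < n" "A $$ (i,i) \<noteq> 0" for i
    using d0[OF that(1)] sign[OF that(1) that(1)] that(2)
    by (auto simp: d_def nonpos_imaginary_def complex_eq_iff)
  show "x $ i = x $ j" if "i < n" "j < n" "A $$ (i,j) \<noteq> 0" for i j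
    using p0[OF that(1,2)] sign[OF that(1,2)] that(3)
    by (auto simp: p_def nonpos_imaginary_def complex_eq_iff)
qed

lemma loopy_laplacian_form_eq_0_imp_zero:
  assumes A: "A \<in> carrier_mat n n" "sym_mat A" "hyp1 A" and x: "x \<in> carrier_vec n"
    and form: "(\<Sum>i<n. cnj (x $ i) * (loopy_laplacian A *\<^sub>v x) $ i) = 0"
  shows "x = 0\<^sub>v n"
proof -
  have sign: "\<And>i j. i < n \<Longrightarrow> j < n \<Longrightarrow> nonpos_imaginary (A $$ (i,j))"
    using hyp1_nonpos_imaginary[OF A(3)] A(1) by simp
  obtain i0 where i0: "i0 < n" "A $$ (i0,i0) \<noteq> 0"
    using A(1,3) by (auto simp: hyp1_def)
  have "x $ j = x $ i0" if "j < n" for j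
  proof (rule connected_network_const[where f = "($) x"])
    show "connected_network A"
      using A(3) by (simp add: hyp1_def)
    show "x $ k = x $ l" if "line A k l" for k l
      using that A(1) by (intro loopy_laplacian_form_eq_0(2)[OF A(1,2) sign x form]) (auto simp: line_def)
  qed (use A(1) that i0 in auto)
  moreover have "x $ i0 = 0"
    using loopy_laplacian_form_eq_0(1)[OF A(1,2) sign x form i0] .
  ultimately show ?thesis
    using x by (intro eq_vecI) auto
qed

lemma invertible_mat_if_trivial_kernel:
  fixes Q :: "'a :: field mat"
  assumes Q: "Q \<in> carrier_mat n n"
    and kernel: "\<And>x. x \<in> carrier_vec n \<Longrightarrow> Q *\<^sub>v x = 0\<^sub>v n \<Longrightarrow> x = 0\<^sub>v n"
  shows "invertible_mat Q"
proof -
  have "det Q \<noteq> 0"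
    using det_0_iff_vec_prod_zero[OF Q] kernel by blast
  then have "Q \<in> Units (ring_mat TYPE('a) n n)"
    by (rule det_non_zero_imp_unit[OF Q])
  then obtain B where "B \<in> carrier_mat n n" "B * Q = 1\<^sub>m n" "Q * B = 1\<^sub>m n"
    by (auto simp: Units_def ring_mat_def)
  then show ?thesis
    using Q by (auto simp: invertible_mat_def inverts_mat_def)
qed

lemma invertible_loopy_laplacian:
  assumes "A \<in> carrier_mat n n" "sym_mat A" "hyp1 A"
  shows "invertible_mat (loopy_laplacian A)"
proof (rule invertible_mat_if_trivial_kernel)
  show "loopy_laplacian A \<in> carrier_mat n n"
    using assms(1) by (rule loopy_laplacian_carrier)
  fix x assume "x \<in> carrier_vec n" "loopy_laplacian A *\<^sub>v x = 0\<^sub>v n"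
  then show "x = 0\<^sub>v n"
    using assms by (intro loopy_laplacian_form_eq_0_imp_zero) auto
qed

lemma hyp2_loopy_laplacian_imp_zero:
  assumes "A \<in> carrier_mat n n" "sym_mat A" "hyp1 A" "V \<in> carrier_vec n"
    and "hyp2 (loopy_laplacian A) V C"
  shows "V = 0\<^sub>v n"
proof (rule loopy_laplacian_form_eq_0_imp_zero[OF assms(1-4)])
  have "(\<Sum>i<n. V $ i * cnj ((loopy_laplacian A *\<^sub>v V) $ i)) = 0"
    using assms(4,5) by (auto simp: hyp2_def)
  then have "cnj (\<Sum>i<n. V $ i * cnj ((loopy_laplacian A *\<^sub>v V) $ i)) = 0"
    by simp
  then show "(\<Sum>i<n. cnj (V $ i) * (loopy_laplacian A *\<^sub>v V) $ i) = 0"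
    by (simp add: cnj_sum)
qed

lemma mult_mat_vec_zero_vec: "A *\<^sub>v 0\<^sub>v n = 0\<^sub>v (dim_row A)"
  by (intro eq_vecI) (auto simp: scalar_prod_def)

lemma hyp2_zero: "Q \<in> carrier_mat k l \<Longrightarrow> hyp2 Q (0\<^sub>v n) (0\<^sub>v k)"
  by (auto simp: hyp2_def mult_mat_vec_zero_vec)

(* The matrix A^tri of the paper: the nodes m, ..., dim_row A - 1 are merged into node m; lines
   among them disappear and their shunts add up to the shunt of m. *)
definition merge_tail :: "nat \<Rightarrow> complex mat \<Rightarrow> complex mat" where
  "merge_tail m A = mat (m+1) (m+1) (\<lambda>(i,j).
     if i < m \<and> j < m then A $$ (i,j)
     else if i < m then (\<Sum>k\<in>{m..<dim_row A}. A $$ (i,k))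
     else if j < m then (\<Sum>k\<in>{m..<dim_row A}. A $$ (k,j))
     else (\<Sum>k\<in>{m..<dim_row A}. A $$ (k,k)))"

lemma merge_tail_carrier: "merge_tail m A \<in> carrier_mat (m+1) (m+1)"
  by (simp add: merge_tail_def)

lemma index_merge_tail:
  assumes "A \<in> carrier_mat n n" "i \<le> m" "j \<le> m"
  shows "merge_tail m A $$ (i,j) =
    (if i < m \<and> j < m then A $$ (i,j)
     else if i < m then (\<Sum>k\<in>{m..<n}. A $$ (i,k))
     else if j < m then (\<Sum>k\<in>{m..<n}. A $$ (k,j))
     else (\<Sum>k\<in>{m..<n}. A $$ (k,k)))"
  using assms by (simp add: merge_tail_def)

lemma Q_tri_loopy_laplacian:
  assumes A: "A \<in> carrier_mat n n" "sym_mat A" and n: "3 \<le> n"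
  shows "Q_tri n (loopy_laplacian A) = loopy_laplacian (merge_tail (n-3) A)"
proof (rule eq_matI)
  define m where "m = n - 3"
  define T where "T = {m..<n}"
  let ?Q = "loopy_laplacian A" and ?M = "merge_tail m A"
  have n_eq: "n - 2 = m + 1" "n - 3 = m" using n by (auto simp: m_def)
  have T: "T \<subseteq> {..<n}" "{..<n} - T = {..<m}" "m \<le> n" by (auto simp: T_def m_def)
  have split: "(\<Sum>k<n. f k) = (\<Sum>k<m. f k) + (\<Sum>k\<in>T. f k)" for f :: "nat \<Rightarrow> complex"
    unfolding T_def lessThan_atLeast0 using T(3) by (simp add: sum.atLeastLessThan_concat)
  have M: "?M $$ (i,j) = (if i < m \<and> j < m then A $$ (i,j)
      else if i < m then (\<Sum>k\<in>T. A $$ (i,k)) else if j < m then (\<Sum>k\<in>T. A $$ (k,j))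
      else (\<Sum>k\<in>T. A $$ (k,k)))" if "i < m+1" "j < m+1" for i j
    using that index_merge_tail[OF A(1)] by (simp add: T_def)
  have Q_off: "?Q $$ (k,l) = - A $$ (l,k)" if "k < n" "l < n" "k \<noteq> l" for k l
    using that A sym_mat_entry[OF A(1,2) that(2,1)] by (simp add: loopy_laplacian_def)
  fix i j assume "i < dim_row (loopy_laplacian ?M)" "j < dim_col (loopy_laplacian ?M)"
  then have i: "i < m+1" and j: "j < m+1" by (simp_all add: loopy_laplacian_def merge_tail_def)
  have L: "loopy_laplacian ?M $$ (i,j)
      = (if i = j then (\<Sum>k<m. ?M $$ (i,k)) + ?M $$ (i,m) else - ?M $$ (i,j))"
    using i j by (simp add: loopy_laplacian_def merge_tail_def)
  have Q: "Q_tri n ?Q $$ (i,j) = (if i < m \<and> j < m then ?Q $$ (i,j)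
      else if i < m then (\<Sum>k\<in>T. ?Q $$ (k,i)) else if j < m then (\<Sum>k\<in>T. ?Q $$ (k,j))
      else (\<Sum>k\<in>T. \<Sum>l\<in>T. ?Q $$ (k,l)))"
    using i j by (simp add: Q_tri_def T_def n_eq)
  consider "i < m" "j < m" | "i < m" "j = m" | "i = m" "j < m" | "i = m" "j = m"
    using i j by linarith
  then show "Q_tri n ?Q $$ (i,j) = loopy_laplacian ?M $$ (i,j)"
  proof cases
    case 1
    then show ?thesis
      unfolding Q L using A M T(3) by (auto simp: loopy_laplacian_def split[symmetric])
  next
    case 2
    then show ?thesis
      unfolding Q L using M T(3) Q_off by (simp add: T_def sum_negf)
  next
    case 3
    have "(\<Sum>k\<in>T. ?Q $$ (k,j)) = - (\<Sum>k\<in>T. A $$ (k,j))"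
      using 3 T(3) A by (auto simp: T_def sum_negf loopy_laplacian_def intro!: sum.cong)
    then show ?thesis unfolding Q L using 3 M by simp
  next
    case 4
    have "(\<Sum>k\<in>T. \<Sum>l\<in>T. ?Q $$ (k,l)) = (\<Sum>k\<in>T. (\<Sum>l<m. A $$ (k,l)) + A $$ (k,k))"
      using sum_row_loopy_laplacian[OF A(1) _ T(1)] T(2) by simp
    also have "\<dots> = (\<Sum>l<m. \<Sum>k\<in>T. A $$ (k,l)) + (\<Sum>k\<in>T. A $$ (k,k))"
      by (simp only: sum.distrib) (subst sum.swap, rule refl)
    finally show ?thesis unfolding Q L using 4 M by simp
  qed
qed (use n in \<open>auto simp: Q_tri_def merge_tail_def loopy_laplacian_def\<close>)

lemma sym_mat_merge_tail:
  assumes A: "A \<in> carrier_mat n n" "sym_mat A" and m: "m \<le> n"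
  shows "sym_mat (merge_tail m A)"
  unfolding sym_mat_def
proof (rule eq_matI)
  fix i j assume "i < dim_row (merge_tail m A)" "j < dim_col (merge_tail m A)"
  then have i: "i \<le> m" and j: "j \<le> m" by (auto simp: merge_tail_def)
  have A_sym: "A $$ (k,l) = A $$ (l,k)" if "k < n" "l < n" for k l
    using sym_mat_entry[OF A that] .
  have "(merge_tail m A)\<^sup>T $$ (i,j) = merge_tail m A $$ (j,i)"
    using i j by (simp add: merge_tail_def)
  then show "(merge_tail m A)\<^sup>T $$ (i,j) = merge_tail m A $$ (i,j)"
    using i j m A_sym by (auto simp: index_merge_tail[OF A(1)] intro!: sum.cong)
qed (auto simp: merge_tail_def)

lemma nonpos_imaginary_merge_tail:
  assumes A: "A \<in> carrier_mat n n" "hyp1 A" and m: "m \<le> n" and ij: "i \<le> m" "j \<le> m"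
  shows "nonpos_imaginary (merge_tail m A $$ (i,j))"
proof -
  have "nonpos_imaginary (A $$ (k,l))" if "k < n" "l < n" for k l
    using hyp1_nonpos_imaginary[OF A(2)] A(1) that by simp
  then show ?thesis
    using ij m by (auto simp: index_merge_tail[OF A(1) ij] intro!: nonpos_imaginary_sum)
qed

lemma merge_tail_ne_0_iff:
  assumes A: "A \<in> carrier_mat n n" "hyp1 A" and m: "m \<le> n" and i: "i < m"
  shows "merge_tail m A $$ (i,m) \<noteq> 0 \<longleftrightarrow> (\<exists>k\<in>{m..<n}. A $$ (i,k) \<noteq> 0)"
    and "merge_tail m A $$ (m,i) \<noteq> 0 \<longleftrightarrow> (\<exists>k\<in>{m..<n}. A $$ (k,i) \<noteq> 0)"
  using sum_nonpos_imaginary_eq_0_iff[of "{m..<n}" "\<lambda>k. A $$ (i,k)"]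
    sum_nonpos_imaginary_eq_0_iff[of "{m..<n}" "\<lambda>k. A $$ (k,i)"]
    hyp1_nonpos_imaginary[OF A(2)] A(1) m i
  by (auto simp: index_merge_tail[OF A(1)])

lemma merge_tail_diag_ne_0_iff:
  assumes A: "A \<in> carrier_mat n n" "hyp1 A" and m: "m \<le> n"
  shows "merge_tail m A $$ (m,m) \<noteq> 0 \<longleftrightarrow> (\<exists>k\<in>{m..<n}. A $$ (k,k) \<noteq> 0)"
  using sum_nonpos_imaginary_eq_0_iff[of "{m..<n}" "\<lambda>k. A $$ (k,k)"]
    hyp1_nonpos_imaginary[OF A(2)] A(1) m
  by (auto simp: index_merge_tail[OF A(1)])

lemma line_merge_tail:
  assumes A: "A \<in> carrier_mat n n" "hyp1 A" and m: "m \<le> n" and ij: "line A i j"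
  shows "(line (merge_tail m A))\<^sup>*\<^sup>* (min i m) (min j m)"
proof -
  let ?M = "merge_tail m A"
  have i: "i < n" and j: "j < n" and "i \<noteq> j" and Aij: "A $$ (i,j) \<noteq> 0"
    using ij A(1) by (auto simp: line_def)
  consider "i < m" "j < m" | "i < m" "m \<le> j" | "m \<le> i" "j < m" | "m \<le> i" "m \<le> j"
    by linarith
  then show ?thesis
  proof cases
    case 1
    then have "line ?M i j"
      using \<open>i \<noteq> j\<close> Aij A(1) by (simp add: line_def index_merge_tail merge_tail_def)
    then show ?thesis using 1 by simp
  next
    case 2
    then have "line ?M i m"
      using merge_tail_ne_0_iff(1)[OF A m] j Aij by (auto simp: line_def merge_tail_def)
    then show ?thesis using 2 by simp
  next
    case 3
    then have "line ?M m j"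
      using merge_tail_ne_0_iff(2)[OF A m] i Aij by (auto simp: line_def merge_tail_def)
    then show ?thesis using 3 by simp
  next
    case 4
    then show ?thesis by simp
  qed
qed

lemma connected_network_merge_tail:
  assumes A: "A \<in> carrier_mat n n" "hyp1 A" and m: "m < n"
  shows "connected_network (merge_tail m A)"
  unfolding connected_network_def
proof (intro allI impI)
  let ?M = "merge_tail m A"
  fix i j assume "i < dim_row ?M" "j < dim_row ?M"
  then have "i \<le> m" "j \<le> m" by (auto simp: merge_tail_def)
  have "(line A)\<^sup>*\<^sup>* i j"
    using A \<open>i \<le> m\<close> \<open>j \<le> m\<close> m by (simp add: hyp1_def connected_network_def)
  then have "(line ?M)\<^sup>*\<^sup>* (min i m) (min j m)"
    by (induction rule: rtranclp_induct)
      (auto intro: rtranclp_trans line_merge_tail[OF A less_imp_le[OF m]])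
  then show "(line ?M)\<^sup>*\<^sup>* i j"
    using \<open>i \<le> m\<close> \<open>j \<le> m\<close> by (simp add: min_absorb1)
qed

lemma hyp1_merge_tail:
  assumes A: "A \<in> carrier_mat n n" "hyp1 A" and m: "m < n"
  shows "hyp1 (merge_tail m A)"
  unfolding hyp1_def
proof (intro conjI)
  let ?M = "merge_tail m A"
  show "connected_network ?M"
    using connected_network_merge_tail[OF A m] .
  show "\<forall>i<dim_row ?M. \<forall>j<dim_row ?M. ?M $$ (i,j) \<noteq> 0 \<longrightarrow> Re (?M $$ (i,j)) = 0 \<and> Im (?M $$ (i,j)) < 0"
  proof (intro allI impI)
    fix i j assume "i < dim_row ?M" "j < dim_row ?M" "?M $$ (i,j) \<noteq> 0"
    moreover from calculation have "nonpos_imaginary (?M $$ (i,j))"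
      using A m by (intro nonpos_imaginary_merge_tail) (auto simp: merge_tail_def)
    ultimately show "Re (?M $$ (i,j)) = 0 \<and> Im (?M $$ (i,j)) < 0"
      using nonpos_imaginary_nonzero_iff by blast
  qed
  obtain i0 where i0: "i0 < n" "A $$ (i0,i0) \<noteq> 0"
    using A by (auto simp: hyp1_def)
  show "\<exists>i<dim_row ?M. ?M $$ (i,i) \<noteq> 0"
  proof (cases "i0 < m")
    case True
    then show ?thesis
      using i0 A(1) by (intro exI[of _ i0]) (simp add: index_merge_tail merge_tail_def)
  next
    case False
    then show ?thesis
      using i0 merge_tail_diag_ne_0_iff[OF A less_imp_le[OF m]]
      by (intro exI[of _ m]) (auto simp: merge_tail_def)
  qed
qed

theorem lemma2p14:
  fixes n :: nat and A :: "complex mat" and V :: "complex vec"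
  assumes "n \<ge> 3"
    and "A \<in> carrier_mat n n" and "sym_mat A"
    and "V \<in> carrier_vec n"
    and "hyp1 A"
    and "hyp2 (loopy_laplacian A) V (loopy_laplacian A *\<^sub>v V)"
    and "A $$ (n-3, n-2) \<noteq> 0" and "A $$ (n-3, n-1) \<noteq> 0" and "A $$ (n-2, n-1) \<noteq> 0"
  shows "let Q = loopy_laplacian A; C = Q *\<^sub>v V;
             Qt = Q_tri n Q; Ct = C_tri n C;
             Vt = the (mat_inverse Qt) *\<^sub>v Ct
         in Qt \<in> carrier_mat (n-2) (n-2) \<and> invertible_mat Qt \<and> is_loopy_laplacian Qt
            \<and> hyp1 (adj_of_laplacian Qt) \<and> hyp2 Qt Vt Ct
            \<and> (\<forall>i<n-3. adj_of_laplacian Qt $$ (i, n-3) \<noteq> 0 \<longleftrightarrow>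
                        (\<exists>k\<in>{n-3..<n}. A $$ (i,k) \<noteq> 0))"
proof -
  define M where "M = merge_tail (n-3) A"
  have n: "n - 3 < n" "n - 2 = n - 3 + 1"
    using assms(1) by auto
  have M: "M \<in> carrier_mat (n-2) (n-2)" "sym_mat M" "hyp1 M"
    unfolding M_def n(2)
    by (rule merge_tail_carrier sym_mat_merge_tail[OF assms(2,3)] hyp1_merge_tail[OF assms(2,5)], use n in simp)+
  have Q: "Q_tri n (loopy_laplacian A) = loopy_laplacian M"
    unfolding M_def by (rule Q_tri_loopy_laplacian[OF assms(2,3,1)])
  have "V = 0\<^sub>v n"
    by (rule hyp2_loopy_laplacian_imp_zero[OF assms(2,3,5,4,6)])
  then have C: "C_tri n (loopy_laplacian A *\<^sub>v V) = 0\<^sub>v (n-2)"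
    using assms(2) by (auto simp: C_tri_def loopy_laplacian_def)
  show ?thesis
    unfolding Let_def Q C adj_of_laplacian_loopy_laplacian[OF M(1)] mult_mat_vec_zero_vec
    using loopy_laplacian_carrier[OF M(1)] invertible_loopy_laplacian[OF M]
      is_loopy_laplacian_loopy_laplacian[OF M(1,2)] M(3) hyp2_zero[OF loopy_laplacian_carrier[OF M(1)]]
      merge_tail_ne_0_iff(1)[OF assms(2,5), of "n-3", folded M_def] n(1)
    by auto
qed

end
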